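(* The scheme $X_h\subset U_h^{2,q}$ is defined by the vanishing of the polynomials $$f_{2k}=(a_{2k}^{q^2}-a_{2k})+\sum_{i=1}^{2k-1}(-1)^i a_i^q\,(a_{2k-i}^{q^2}-a_{2k-i}),\qquad 1\le k\le h-1,$$ in the coordinates $a_1,\dots,a_{2(h-1)}$ of $1+\sum a_i\tau^i$ (as usual $a_0=1$ is not a coordinate and does not occur).
   Context: Let $p$ be a prime, $q$ a power of $p$, and $h\ge2$ an integer. For a commutative $\mathbb{F}_q$-algebra $A$, $U_h^{2,q}(A)$ is the set of formal expressions $1+\sum_{i=1}^{2(h-1)}a_i\tau^i$ ($a_i\in A$) with multiplication obtained by extending $(a\tau^i)(b\tau^j)=ab^{q^i}\tau^{i+j}$ bi-additively, where $\tau^0=1$ and $\tau^k=0$ for $k>2(h-1)$; as a scheme $U_h^{2,q}$ is affine space with coordinates $a_1,\dots,a_{2(h-1)}$. For $x=1+\sum a_i\tau^i\in U_h^{2,q}(A)$ let $\iota_h(x)=\begin{pmatrix}1+a_2\pi+a_4\pi^2+\cdots & a_1+a_3\pi+a_5\pi^2+\cdots\\ a_1^q\pi+a_3^q\pi^2+\cdots & 1+a_2^q\pi+a_4^q\pi^2+\cdots\end{pmatrix}$, a matrix over $A[\pi]/(\pi^h)$, and write $\det\iota_h(x)=1+\sum_{k=1}^{h-1}c_k(x)\pi^k$. The subscheme $X_h\subset U_h^{2,q}$ is defined by the condition that $\det\iota_h(x)$ is fixed by the $q$-power Frobenius on coefficients, i.e. $c_k^q=c_k$ for $1\le k\le h-1$.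 *)

theory Defs
  imports "HOL-Computational_Algebra.Polynomial"
begin

text \<open>A point of U_h^{2,q}(A) is given by its coordinates a_1,...,a_{2(h-1)};
  we model it by a function a :: nat => 'a of which only the values at
  1..2(h-1) matter. ucoord adds the conventions a_0 = 1 and a_i = 0 for i > 2(h-1).\<close>
definition ucoord :: "nat \<Rightarrow> (nat \<Rightarrow> 'a::comm_ring_1) \<Rightarrow> nat \<Rightarrow> 'a" where
  "ucoord h a i = (if i = 0 then 1 else if i \<le> 2 * (h - 1) then a i else 0)"

text \<open>Entries of iota_h(x), as polynomials in pi of degree < h
  (representatives of elements of A[pi]/(pi^h)).\<close>
definition iota11 :: "nat \<Rightarrow> nat \<Rightarrow> (nat \<Rightarrow> 'a::comm_ring_1) \<Rightarrow> 'a poly" where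
  "iota11 q h a = (\<Sum>j<h. monom (ucoord h a (2 * j)) j)"
definition iota12 :: "nat \<Rightarrow> nat \<Rightarrow> (nat \<Rightarrow> 'a::comm_ring_1) \<Rightarrow> 'a poly" where
  "iota12 q h a = (\<Sum>j<h. monom (ucoord h a (2 * j + 1)) j)"
definition iota21 :: "nat \<Rightarrow> nat \<Rightarrow> (nat \<Rightarrow> 'a::comm_ring_1) \<Rightarrow> 'a poly" where
  "iota21 q h a = (\<Sum>j\<in>{1..<h}. monom ((ucoord h a (2 * j - 1)) ^ q) j)"
definition iota22 :: "nat \<Rightarrow> nat \<Rightarrow> (nat \<Rightarrow> 'a::comm_ring_1) \<Rightarrow> 'a poly" where
  "iota22 q h a = (\<Sum>j<h. monom ((ucoord h a (2 * j)) ^ q) j)"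

text \<open>det iota_h(x), computed in A[pi]; its coefficients of pi^k for k < h agree
  with those of the determinant in A[pi]/(pi^h).\<close>
definition det_iota :: "nat \<Rightarrow> nat \<Rightarrow> (nat \<Rightarrow> 'a::comm_ring_1) \<Rightarrow> 'a poly" where
  "det_iota q h a = iota11 q h a * iota22 q h a - iota12 q h a * iota21 q h a"

definition c_coef :: "nat \<Rightarrow> nat \<Rightarrow> (nat \<Rightarrow> 'a::comm_ring_1) \<Rightarrow> nat \<Rightarrow> 'a" where
  "c_coef q h a k = coeff (det_iota q h a) k"

definition in_X :: "nat \<Rightarrow> nat \<Rightarrow> (nat \<Rightarrow> 'a::comm_ring_1) \<Rightarrow> bool" where
  "in_X q h a \<longleftrightarrow> (\<forall>k\<in>{1..h-1}. (c_coef q h a k) ^ q = c_coef q h a k)"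

definition f_poly :: "nat \<Rightarrow> nat \<Rightarrow> (nat \<Rightarrow> 'a::comm_ring_1) \<Rightarrow> nat \<Rightarrow> 'a" where
  "f_poly q h a k =
     ((ucoord h a (2*k)) ^ (q^2) - ucoord h a (2*k))
     + (\<Sum>i\<in>{1..2*k-1}. (-1) ^ i * (ucoord h a i) ^ q *
          ((ucoord h a (2*k-i)) ^ (q^2) - ucoord h a (2*k-i)))"

end

theory Submission
  imports Defs
begin

text \<open>The map \<open>\<phi>\<close> from the finite field of order \<open>q\<close> sends the binomial coefficients
  \<open>q choose i\<close>, \<open>0 < i < q\<close>, which vanish in that field, to \<open>0\<close>; hence \<open>x \<mapsto> x^q\<close> is additive on
  \<open>A\<close>. Expanding the determinant gives
  \<open>c_k = \<Sum>(-1)^i a_i a_(2k-i)^q\<close> over \<open>i \<le> 2k\<close>, and reversing the order of summation also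
  \<open>c_k = \<Sum>(-1)^i a_i^q a_(2k-i)\<close>. Raising the first form to the \<open>q\<close>-th power and subtracting
  the second yields \<open>c_k^q - c_k = f_2k\<close>.\<close>

lemma card_finite_field_ge_2: "card (UNIV :: 'k::{field,finite} set) \<ge> 2"
proof -
  have "card {0::'k, 1} \<le> card (UNIV :: 'k set)" by (rule card_mono) auto
  thus ?thesis by simp
qed

lemma power_card_finite_field:
  fixes t :: "'k::{field,finite}"
  shows "t ^ card (UNIV :: 'k set) = t"
proof (cases "t = 0")
  case True
  thus ?thesis by (simp add: finite_UNIV_card_ge_0)
next
  case False
  let ?S = "UNIV - {0::'k}"
  have bij: "bij_betw ((*) t) ?S ?S"
    by (rule bij_betw_byWitness[where f' = "\<lambda>x. x / t"]) (use False in auto)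
  have "t ^ card ?S * (\<Prod>x\<in>?S. x) = (\<Prod>x\<in>?S. t * x)"
    by (simp add: prod.distrib)
  also have "\<dots> = (\<Prod>x\<in>?S. x)"
    using prod.reindex_bij_betw[OF bij, of "\<lambda>x. x"] by simp
  finally have "t ^ card ?S = 1" by simp
  moreover have "card (UNIV :: 'k set) = Suc (card ?S)"
    using finite_UNIV_card_ge_0[where 'a = 'k] by (simp add: card_Diff_singleton)
  ultimately show ?thesis by (metis power_Suc mult_1_right)
qed

text \<open>The polynomial \<open>(X+1)^q - X^q - 1\<close> has degree \<open>< q\<close> but vanishes at all \<open>q\<close> points of
  the field, so it is zero.\<close>
lemma binomial_card_finite_field_eq_0:
  assumes "0 < i" "i < card (UNIV :: 'k::{field,finite} set)"
  shows "(of_nat (card (UNIV :: 'k set) choose i) :: 'k) = 0"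
proof -
  define q where "q = card (UNIV :: 'k set)"
  define P :: "'k poly" where "P = (\<Sum>i\<in>{1..<q}. monom (of_nat (q choose i)) i)"
  have q2: "q \<ge> 2" unfolding q_def by (rule card_finite_field_ge_2)
  have coeff_P: "coeff P j = (if j \<in> {1..<q} then of_nat (q choose j) else 0)" for j
    unfolding P_def by (simp add: coeff_sum coeff_monom)
  have "poly P t = 0" for t
  proof -
    have split: "{..q} = insert 0 (insert q {1..<q})" using q2 by auto
    have "t + 1 = (t + 1) ^ q" unfolding q_def by (rule power_card_finite_field[symmetric])
    also have "\<dots> = (\<Sum>i\<le>q. of_nat (q choose i) * t ^ i)"
      by (simp add: binomial_ring)
    also have "\<dots> = 1 + t ^ q + poly P t"
      using q2 by (simp add: split P_def poly_sum poly_monom)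
    also have "t ^ q = t" unfolding q_def by (rule power_card_finite_field)
    finally show ?thesis by simp
  qed
  hence "{x. poly P x = 0} = UNIV" by auto
  moreover have "degree P < q"
    using q2 by (intro le_less_trans[OF degree_le[of "q - 1"]]) (auto simp: coeff_P)
  ultimately have "P = 0"
    using card_poly_roots_bound[of P] unfolding q_def by fastforce
  thus ?thesis using assms coeff_P[of i] unfolding q_def by simp
qed

lemma power_card_add_of_additive:
  fixes \<phi> :: "'k::{field,finite} \<Rightarrow> 'a::comm_ring_1"
  assumes "\<phi> 1 = 1" and add: "\<And>x y. \<phi> (x + y) = \<phi> x + \<phi> y"
  shows "(x + y :: 'a) ^ card (UNIV :: 'k set)
    = x ^ card (UNIV :: 'k set) + y ^ card (UNIV :: 'k set)"
proof -
  let ?q = "card (UNIV :: 'k set)"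
  have q2: "?q \<ge> 2" by (rule card_finite_field_ge_2)
  have "\<phi> 0 = 0" using add[of 0 0] by simp
  hence \<phi>_of_nat: "\<phi> (of_nat n) = of_nat n" for n
    by (induction n) (simp_all add: add assms(1))
  have "(of_nat (?q choose i) :: 'a) = 0" if "0 < i" "i < ?q" for i
    using \<phi>_of_nat[of "?q choose i"] binomial_card_finite_field_eq_0[OF that] \<open>\<phi> 0 = 0\<close>
    by simp
  moreover have "{..?q} = insert 0 (insert ?q {1..<?q})" using q2 by auto
  ultimately show ?thesis
    using q2 by (simp add: binomial_ring[of x y ?q] add.commute)
qed

lemma power_sum_of_power_add:
  assumes "\<And>x y :: 'a::comm_ring_1. (x + y) ^ q = x ^ q + y ^ q" "q > 0"
  shows "(sum f S :: 'a) ^ q = (\<Sum>i\<in>S. f i ^ q)"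
  using assms by (induction S rule: infinite_finite_induct) (auto simp: power_0_left)

lemma neg_one_power_of_power_add:
  assumes "\<And>x y :: 'a::comm_ring_1. (x + y) ^ q = x ^ q + y ^ q" "q > 0"
  shows "(-1 :: 'a) ^ q = -1"
proof -
  have "(1 + (-1::'a)) ^ q = 1 + (-1) ^ q" using assms(1)[of 1 "-1"] by simp
  hence "1 + (-1::'a) ^ q = 0" using assms(2) by (simp add: power_0_left)
  thus ?thesis by (simp add: eq_neg_iff_add_eq_0 add.commute)
qed

lemma sum_alternating_even_odd:
  fixes g :: "nat \<Rightarrow> 'a::comm_ring_1"
  shows "(\<Sum>i\<le>2*k. (-1)^i * g i) = (\<Sum>j\<le>k. g (2*j)) - (\<Sum>j<k. g (2*j+1))"
proof (induction k)
  case 0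
  thus ?case by simp
next
  case (Suc k)
  have "{..2 * Suc k} = insert (2*k+2) (insert (2*k+1) {..2*k})" by auto
  thus ?case using Suc by (simp add: algebra_simps)
qed

lemma sum_alternating_reflect:
  fixes g :: "nat \<Rightarrow> nat \<Rightarrow> 'a::comm_ring_1"
  shows "(\<Sum>i\<le>2*k. (-1)^i * g i (2*k - i)) = (\<Sum>i\<le>2*k. (-1)^i * g (2*k - i) i)"
proof (rule sum.reindex_bij_witness[where i = "\<lambda>i. 2*k - i" and j = "\<lambda>i. 2*k - i"])
  fix i assume "i \<in> {..2*k}"
  moreover have "(-1::'a) ^ (2*k - i) = (-1) ^ i" if "i \<le> 2*k"
    using that by (auto simp: minus_one_power_iff)
  ultimately show "(-1)^(2*k - i) * g (2*k - (2*k - i)) (2*k - i) = (-1)^i * g i (2*k - i)"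
    by simp
qed auto

lemma coeff_iota11: "coeff (iota11 q h a) j = (if j < h then ucoord h a (2*j) else 0)"
  unfolding iota11_def by (simp add: coeff_sum coeff_monom)

lemma coeff_iota12: "coeff (iota12 q h a) j = (if j < h then ucoord h a (2*j+1) else 0)"
  unfolding iota12_def by (simp add: coeff_sum coeff_monom)

lemma coeff_iota21:
  "coeff (iota21 q h a) j = (if 1 \<le> j \<and> j < h then ucoord h a (2*j-1) ^ q else 0)"
  unfolding iota21_def by (simp add: coeff_sum coeff_monom)

lemma coeff_iota22: "coeff (iota22 q h a) j = (if j < h then ucoord h a (2*j) ^ q else 0)"
  unfolding iota22_def by (simp add: coeff_sum coeff_monom)

lemma c_coef_alternating_sum:
  assumes "1 \<le> k" "k < h"
  shows "c_coef q h a k = (\<Sum>i\<le>2*k. (-1)^i * (ucoord h a i * ucoord h a (2*k - i) ^ q))"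
proof -
  let ?u = "ucoord h a"
  have even: "coeff (iota11 q h a * iota22 q h a) k = (\<Sum>j\<le>k. ?u (2*j) * ?u (2*k - 2*j) ^ q)"
    unfolding coeff_mult using assms
    by (intro sum.cong) (auto simp: coeff_iota11 coeff_iota22 right_diff_distrib')
  have "coeff (iota12 q h a * iota21 q h a) k
      = (\<Sum>j<Suc k. coeff (iota12 q h a) j * coeff (iota21 q h a) (k - j))"
    unfolding coeff_mult by (simp add: lessThan_Suc_atMost)
  also have "\<dots> = (\<Sum>j<k. coeff (iota12 q h a) j * coeff (iota21 q h a) (k - j))"
    by (simp add: coeff_iota21)
  also have "\<dots> = (\<Sum>j<k. ?u (2*j+1) * ?u (2*k - (2*j+1)) ^ q)"
    using assms by (intro sum.cong) (auto simp: coeff_iota12 coeff_iota21 diff_mult_distrib2)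
  finally have odd: "coeff (iota12 q h a * iota21 q h a) k = \<dots>" .
  show ?thesis
    unfolding c_coef_def det_iota_def coeff_diff even odd sum_alternating_even_odd by simp
qed

lemma c_coef_power_diff_eq_f_poly:
  fixes a :: "nat \<Rightarrow> 'a::comm_ring_1"
  assumes frob: "\<And>x y :: 'a. (x + y) ^ q = x ^ q + y ^ q" and "q > 0"
    and k: "1 \<le> k" "k < h"
  shows "(c_coef q h a k) ^ q - c_coef q h a k = f_poly q h a k"
proof -
  let ?u = "ucoord h a"
  have sign: "((-1::'a) ^ i) ^ q = (-1) ^ i" for i
    using neg_one_power_of_power_add[OF assms(1,2)]
    by (metis power_mult power_mult_distrib mult.commute)
  have power: "(c_coef q h a k) ^ q = (\<Sum>i\<le>2*k. (-1)^i * (?u i ^ q * ?u (2*k - i) ^ q\<^sup>2))"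
    unfolding c_coef_alternating_sum[OF k] power_sum_of_power_add[OF assms(1,2)]
    by (simp add: power_mult_distrib sign power2_eq_square power_mult)
  have reflected: "c_coef q h a k = (\<Sum>i\<le>2*k. (-1)^i * (?u i ^ q * ?u (2*k - i)))"
    unfolding c_coef_alternating_sum[OF k]
      sum_alternating_reflect[of "\<lambda>i j. ?u i * ?u j ^ q" k]
    by (simp add: mult.commute)
  have "(c_coef q h a k) ^ q - c_coef q h a k
      = (\<Sum>i\<le>2*k. (-1)^i * (?u i ^ q * ?u (2*k - i) ^ q\<^sup>2))
        - (\<Sum>i\<le>2*k. (-1)^i * (?u i ^ q * ?u (2*k - i)))"
    by (subst power, subst reflected) (rule refl)
  also have "\<dots> = (\<Sum>i\<le>2*k. (-1)^i * ?u i ^ q * (?u (2*k - i) ^ q\<^sup>2 - ?u (2*k - i)))"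
    unfolding sum_subtractf[symmetric] by (intro sum.cong refl) (simp add: algebra_simps)
  also have "{..2*k} = insert 0 (insert (2*k) {1..2*k-1})" using k by auto
  also have "(\<Sum>i\<in>insert 0 (insert (2*k) {1..2*k-1}).
        (-1)^i * ?u i ^ q * (?u (2*k - i) ^ q\<^sup>2 - ?u (2*k - i))) = f_poly q h a k"
    using k unfolding f_poly_def by (simp add: ucoord_def)
  finally show ?thesis .
qed

theorem theorem4p1:
  fixes \<phi> :: "'k::{field,finite} \<Rightarrow> 'a::comm_ring_1"
    and q h :: nat and a :: "nat \<Rightarrow> 'a"
  assumes "card (UNIV :: 'k set) = q"
    and "\<phi> 1 = 1"
    and "\<And>x y. \<phi> (x + y) = \<phi> x + \<phi> y"
    and "\<And>x y. \<phi> (x * y) = \<phi> x * \<phi> y"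
    and "h \<ge> 2"
  shows "in_X q h a \<longleftrightarrow> (\<forall>k\<in>{1..h-1}. f_poly q h a k = 0)"
proof -
  have frob: "\<And>x y :: 'a. (x + y) ^ q = x ^ q + y ^ q"
    using power_card_add_of_additive[OF assms(2,3)] assms(1) by blast
  have "q > 0" using card_finite_field_ge_2[where 'k = 'k] assms(1) by simp
  have "\<forall>k\<in>{1..h-1}. (c_coef q h a k) ^ q - c_coef q h a k = f_poly q h a k"
    using c_coef_power_diff_eq_f_poly[OF frob \<open>q > 0\<close>] assms(5) by auto
  thus ?thesis unfolding in_X_def by (metis eq_iff_diff_eq_0)
qed

end
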